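(* There exist a strongly connected digraph $D$ and a strongly connected spanning subdigraph $H$ of $D$ such that $src^*(D) > src^*(H)$.
   Context: All digraphs are finite, without loops or multiple arcs. For a strongly connected digraph $D$, an arc-colouring $\Gamma: A(D)\to\{1,\dots,k\}$ is strongly rainbow connected if for every ordered pair of distinct vertices $x,y$ there is a directed $xy$-path of length equal to the distance $d_D(x,y)$ (an $xy$-geodesic) whose arcs have pairwise distinct colours. The strong rainbow connection number $src^*(D)$ is the minimum $k$ for which $D$ admits a strongly rainbow connected arc-colouring with $k$ colours. *)

theory Defs
  imports Main
begin

text \<open>A digraph is a pair (V, A): a finite vertex set and an arc set A \<subseteq> V \<times> V
  without loops (multiple arcs are excluded automatically since A is a set).\<close>
definition digraph :: "'a set \<Rightarrow> ('a \<times> 'a) set \<Rightarrow> bool" where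
  "digraph V A \<longleftrightarrow> finite V \<and> A \<subseteq> V \<times> V \<and> (\<forall>x. (x, x) \<notin> A)"

definition arcs_of :: "'a list \<Rightarrow> ('a \<times> 'a) list" where
  "arcs_of p = zip p (tl p)"

definition is_path :: "('a \<times> 'a) set \<Rightarrow> 'a \<Rightarrow> 'a \<Rightarrow> 'a list \<Rightarrow> bool" where
  "is_path A x y p \<longleftrightarrow> p \<noteq> [] \<and> hd p = x \<and> last p = y \<and> distinct p
      \<and> set (arcs_of p) \<subseteq> A"

definition path_len :: "'a list \<Rightarrow> nat" where
  "path_len p = length p - 1"

definition strongly_connected :: "'a set \<Rightarrow> ('a \<times> 'a) set \<Rightarrow> bool" where
  "strongly_connected V A \<longleftrightarrow> V \<noteq> {} \<and> (\<forall>x\<in>V. \<forall>y\<in>V. \<exists>p. is_path A x y p)"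

definition ddist :: "('a \<times> 'a) set \<Rightarrow> 'a \<Rightarrow> 'a \<Rightarrow> nat" where
  "ddist A x y = (LEAST n. \<exists>p. is_path A x y p \<and> path_len p = n)"

definition geodesic :: "('a \<times> 'a) set \<Rightarrow> 'a \<Rightarrow> 'a \<Rightarrow> 'a list \<Rightarrow> bool" where
  "geodesic A x y p \<longleftrightarrow> is_path A x y p \<and> path_len p = ddist A x y"

definition strongly_rainbow_colouring ::
    "'a set \<Rightarrow> ('a \<times> 'a) set \<Rightarrow> nat \<Rightarrow> ('a \<times> 'a \<Rightarrow> nat) \<Rightarrow> bool" where
  "strongly_rainbow_colouring V A k \<Gamma> \<longleftrightarrow>
     (\<forall>a\<in>A. \<Gamma> a \<in> {1..k}) \<and>
     (\<forall>x\<in>V. \<forall>y\<in>V. x \<noteq> y \<longrightarrow>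
        (\<exists>p. geodesic A x y p \<and> distinct (map \<Gamma> (arcs_of p))))"

definition src :: "'a set \<Rightarrow> ('a \<times> 'a) set \<Rightarrow> nat" where
  "src V A = (LEAST k. \<exists>\<Gamma>. strongly_rainbow_colouring V A k \<Gamma>)"

end

theory Submission
  imports Defs
begin

text \<open>In D the geodesics
  1\<rightarrow>2\<rightarrow>3\<rightarrow>4, 4\<rightarrow>5\<rightarrow>0\<rightarrow>1\<rightarrow>2 and 3\<rightarrow>4\<rightarrow>5\<rightarrow>0\<rightarrow>1 are the unique shortest paths between their
  end vertices, and every two of the arcs (0,1), (1,2), (3,4), (4,5), (5,0) lie together on one
  of them; hence a strongly rainbow connected colouring of D needs five colours. Deleting (2,3)
  destroys this configuration and H has such a colouring with four colours. The remaining
  finitely many distance facts are checked by enumerating all simple paths.\<close>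

lemma arcs_of_simps [simp]:
  "arcs_of [] = []"
  "arcs_of [v] = []"
  "arcs_of (v # w # p) = (v, w) # arcs_of (w # p)"
  by (simp_all add: arcs_of_def)

lemma set_subset_insert_hd_arc_targets:
  "p \<noteq> [] \<Longrightarrow> set p \<subseteq> insert (hd p) (snd ` set (arcs_of p))"
proof (induction p)
  case (Cons v p)
  then show ?case by (cases p) auto
qed simp

lemma is_path_length_le_card:
  assumes path: "is_path A x y p" and A: "A \<subseteq> V \<times> V" and x: "x \<in> V" and V: "finite V"
  shows "length p \<le> card V"
proof -
  have "insert (hd p) (snd ` set (arcs_of p)) \<subseteq> V"
    using path A x unfolding is_path_def by auto
  then have "set p \<subseteq> V"
    using path set_subset_insert_hd_arc_targets unfolding is_path_def by blast
  then have "card (set p) \<le> card V" using V by (rule card_mono[rotated])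
  then show ?thesis using path distinct_card unfolding is_path_def by metis
qed

fun simple_paths_from :: "('a \<times> 'a) list \<Rightarrow> nat \<Rightarrow> 'a list \<Rightarrow> 'a \<Rightarrow> 'a list list" where
  "simple_paths_from E 0 vis v = [[v]]"
| "simple_paths_from E (Suc n) vis v = [v] # concat (map (\<lambda>w. map ((#) v) (simple_paths_from E n (v # vis) w))
      (map snd (filter (\<lambda>(u, w). u = v \<and> w \<notin> set (v # vis)) E)))"

lemma simple_paths_from_ConsE:
  "p \<in> set (simple_paths_from E n vis v) \<Longrightarrow> \<exists>q. p = v # q"
  by (induction n arbitrary: vis v) auto

lemma mem_simple_paths_from_iff:
  "v \<notin> set vis \<Longrightarrow> p \<in> set (simple_paths_from E n vis v) \<longleftrightarrow>
     (\<exists>q. p = v # q) \<and> distinct p \<and> set p \<inter> set vis = {} \<and> set (arcs_of p) \<subseteq> set E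
     \<and> length p \<le> Suc n"
proof (induction n arbitrary: vis v p)
  case 0
  then show ?case by (cases p) auto
next
  case (Suc n)
  show ?case
  proof (cases p rule: remdups_adj.cases)
    case (3 u w r)
    have "p \<in> set (simple_paths_from E (Suc n) vis v) \<longleftrightarrow> u = v \<and> (v, w) \<in> set E
        \<and> w \<notin> set (v # vis) \<and> w # r \<in> set (simple_paths_from E n (v # vis) w)"
      using 3 simple_paths_from_ConsE[where p = "w # r" and vis = "v # vis"] by force
    also have "\<dots> \<longleftrightarrow> u = v \<and> (v, w) \<in> set E \<and> w \<notin> set (v # vis) \<and> distinct (w # r)
        \<and> set (w # r) \<inter> set (v # vis) = {} \<and> set (arcs_of (w # r)) \<subseteq> set E \<and> length r \<le> n"
      using Suc.IH[where vis = "v # vis" and v = w] by auto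
    finally show ?thesis using Suc.prems 3 by auto
  qed (use Suc.prems in auto)
qed

definition paths_between :: "('a \<times> 'a) list \<Rightarrow> nat \<Rightarrow> 'a \<Rightarrow> 'a \<Rightarrow> 'a list list" where
  "paths_between E N x y = filter (\<lambda>p. last p = y) (simple_paths_from E (N - 1) [] x)"

definition geodesics_between :: "('a \<times> 'a) list \<Rightarrow> nat \<Rightarrow> 'a \<Rightarrow> 'a \<Rightarrow> 'a list list" where
  "geodesics_between E N x y =
     (let P = paths_between E N x y in filter (\<lambda>p. path_len p = Min (path_len ` set P)) P)"

text \<open>The parameter N bounds the number of vertices, hence the length of a simple path.\<close>

lemma is_path_iff_mem_paths_between:
  assumes E: "set E \<subseteq> V \<times> V" and x: "x \<in> V" and V: "finite V" "card V \<le> N"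
  shows "is_path (set E) x y p \<longleftrightarrow> p \<in> set (paths_between E N x y)"
proof
  assume path: "is_path (set E) x y p"
  then have "length p \<le> Suc (N - 1)"
    using is_path_length_le_card[OF path E x V(1)] V(2) by linarith
  moreover have "\<exists>q. p = x # q"
    using path unfolding is_path_def by (metis list.collapse)
  ultimately show "p \<in> set (paths_between E N x y)"
    using path mem_simple_paths_from_iff[of x "[]"]
    unfolding paths_between_def is_path_def by auto
qed (auto simp: paths_between_def is_path_def mem_simple_paths_from_iff[of x "[]"])

lemma geodesic_iff_mem_geodesics_between:
  assumes E: "set E \<subseteq> V \<times> V" and x: "x \<in> V" and V: "finite V" "card V \<le> N"
  shows "geodesic (set E) x y p \<longleftrightarrow> p \<in> set (geodesics_between E N x y)"
proof -
  let ?L = "path_len ` set (paths_between E N x y)"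
  have paths: "is_path (set E) x y q \<longleftrightarrow> q \<in> set (paths_between E N x y)" for q
    using is_path_iff_mem_paths_between[OF E x V] .
  have ddist: "ddist (set E) x y = Min ?L" if "q \<in> set (paths_between E N x y)" for q
  proof -
    have "(\<lambda>n. \<exists>q. is_path (set E) x y q \<and> path_len q = n) = (\<lambda>n. n \<in> ?L)"
      using paths by auto
    moreover have "(LEAST n. n \<in> ?L) = Min ?L"
      using that Least_Min[of "\<lambda>n. n \<in> ?L"] by fastforce
    ultimately show ?thesis unfolding ddist_def by simp
  qed
  show ?thesis
    unfolding geodesic_def geodesics_between_def Let_def paths using ddist by auto
qed

lemma geodesic_unique:
  assumes E: "set E \<subseteq> V \<times> V" and x: "x \<in> V" and V: "finite V" "card V \<le> N"
    and unique: "set (geodesics_between E N x y) = {q}" and p: "geodesic (set E) x y p"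
  shows "p = q"
  using p unique geodesic_iff_mem_geodesics_between[OF E x V] by auto

definition rainbow_geodesics_exist :: "('a \<times> 'a) list \<Rightarrow> 'a list \<Rightarrow> ('a \<times> 'a \<Rightarrow> nat) \<Rightarrow> bool" where
  "rainbow_geodesics_exist E vs \<Gamma> \<longleftrightarrow>
     list_all (\<lambda>x. list_all (\<lambda>y. x = y \<or>
        list_ex (\<lambda>p. distinct (map \<Gamma> (arcs_of p))) (geodesics_between E (length vs) x y)) vs) vs"

lemma strongly_rainbow_colouringI:
  assumes E: "set E \<subseteq> set vs \<times> set vs" and vs: "distinct vs"
    and colours: "\<forall>a\<in>set E. \<Gamma> a \<in> {1..k}" and check: "rainbow_geodesics_exist E vs \<Gamma>"
  shows "strongly_rainbow_colouring (set vs) (set E) k \<Gamma>"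
  unfolding strongly_rainbow_colouring_def
proof (intro conjI colours ballI impI)
  fix x y assume x: "x \<in> set vs" and y: "y \<in> set vs" and "x \<noteq> y"
  then obtain p where "p \<in> set (geodesics_between E (length vs) x y)" "distinct (map \<Gamma> (arcs_of p))"
    using check unfolding rainbow_geodesics_exist_def list_all_iff list_ex_iff by blast
  moreover have "card (set vs) \<le> length vs" by (rule card_length)
  ultimately show "\<exists>p. geodesic (set E) x y p \<and> distinct (map \<Gamma> (arcs_of p))"
    using geodesic_iff_mem_geodesics_between[OF E x] by blast
qed

lemma strongly_connected_if_strongly_rainbow_colouring:
  assumes "strongly_rainbow_colouring V A k \<Gamma>" and "V \<noteq> {}"
  shows "strongly_connected V A"
  unfolding strongly_connected_def
proof (intro conjI ballI)
  fix x y assume "x \<in> V" "y \<in> V"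
  show "\<exists>p. is_path A x y p"
  proof (cases "x = y")
    case True
    then have "is_path A x y [x]" unfolding is_path_def by simp
    then show ?thesis by blast
  next
    case False
    then show ?thesis
      using assms \<open>x \<in> V\<close> \<open>y \<in> V\<close>
      unfolding strongly_rainbow_colouring_def geodesic_def by blast
  qed
qed fact

lemma src_le:
  "strongly_rainbow_colouring V A k \<Gamma> \<Longrightarrow> src V A \<le> k"
  unfolding src_def by (blast intro: Least_le)

lemma src_gt:
  assumes "strongly_rainbow_colouring V A k \<Gamma>"
    and "\<And>j \<Gamma>'. strongly_rainbow_colouring V A j \<Gamma>' \<Longrightarrow> m < j"
  shows "m < src V A"
proof -
  have "\<exists>\<Gamma>'. strongly_rainbow_colouring V A (src V A) \<Gamma>'"
    unfolding src_def by (rule LeastI_ex) (use assms(1) in blast)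
  then show ?thesis using assms(2) by blast
qed

lemma card_le_if_inj_on_colouring:
  assumes "strongly_rainbow_colouring V A k \<Gamma>" and "S \<subseteq> A" and "inj_on \<Gamma> S"
  shows "card S \<le> k"
proof -
  have "\<Gamma> ` S \<subseteq> {1..k}"
    using assms(1,2) unfolding strongly_rainbow_colouring_def by blast
  then have "card (\<Gamma> ` S) \<le> k" using card_mono[of "{1..k}"] by fastforce
  then show ?thesis using card_image[OF assms(3)] by simp
qed

definition D_arcs :: "(nat \<times> nat) list" where
  "D_arcs = [(0, 1), (0, 3), (1, 2), (1, 5), (2, 3), (2, 5), (3, 4), (3, 6), (4, 5), (5, 0), (6, 2), (6, 4)]"

definition H_arcs :: "(nat \<times> nat) list" where
  "H_arcs = removeAll (2, 3) D_arcs"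

definition D_colouring :: "nat \<times> nat \<Rightarrow> nat" where
  "D_colouring e = (case map_of [((0, 1), 1), ((0, 3), 1), ((1, 2), 2), ((1, 5), 2), ((2, 3), 1),
     ((2, 5), 2), ((3, 4), 3), ((3, 6), 3), ((4, 5), 4), ((5, 0), 5), ((6, 2), 2), ((6, 4), 2)] e
   of Some c \<Rightarrow> c | None \<Rightarrow> 0)"

definition H_colouring :: "nat \<times> nat \<Rightarrow> nat" where
  "H_colouring e = (case map_of [((0, 1), 1), ((0, 3), 1), ((1, 2), 2), ((1, 5), 3), ((2, 5), 3),
     ((3, 4), 2), ((3, 6), 2), ((4, 5), 3), ((5, 0), 4), ((6, 2), 1), ((6, 4), 2)] e
   of Some c \<Rightarrow> c | None \<Rightarrow> 0)"

lemma D_arcs_subset: "set D_arcs \<subseteq> {0..<7} \<times> {0..<7}"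
  by (simp add: D_arcs_def)

lemma H_arcs_subset: "set H_arcs \<subseteq> set D_arcs"
  by (simp add: H_arcs_def)

lemma digraph_D: "digraph {0..<7} (set D_arcs)"
  by (auto simp: digraph_def D_arcs_def)

lemma digraph_H: "digraph {0..<7} (set H_arcs)"
  using digraph_D H_arcs_subset unfolding digraph_def by blast

lemma D_colouring_strongly_rainbow: "strongly_rainbow_colouring {0..<7} (set D_arcs) 5 D_colouring"
proof (rule strongly_rainbow_colouringI[where vs = "[0..<7]", unfolded set_upt])
  show "\<forall>a\<in>set D_arcs. D_colouring a \<in> {1..5}"
    by (simp add: D_arcs_def D_colouring_def)
  show "rainbow_geodesics_exist D_arcs [0..<7] D_colouring"
    by code_simp
qed (simp_all add: D_arcs_subset)

lemma H_colouring_strongly_rainbow: "strongly_rainbow_colouring {0..<7} (set H_arcs) 4 H_colouring"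
proof (rule strongly_rainbow_colouringI[where vs = "[0..<7]", unfolded set_upt])
  show "\<forall>a\<in>set H_arcs. H_colouring a \<in> {1..4}"
    by (simp add: H_arcs_def D_arcs_def H_colouring_def)
  show "rainbow_geodesics_exist H_arcs [0..<7] H_colouring"
    by code_simp
qed (use D_arcs_subset H_arcs_subset in auto)

lemma D_unique_geodesics:
  "set (geodesics_between D_arcs 7 1 4) = {[1, 2, 3, 4]}"
  "set (geodesics_between D_arcs 7 4 2) = {[4, 5, 0, 1, 2]}"
  "set (geodesics_between D_arcs 7 3 1) = {[3, 4, 5, 0, 1]}"
  by code_simp+

lemma D_needs_five_colours:
  assumes \<Gamma>: "strongly_rainbow_colouring {0..<7} (set D_arcs) k \<Gamma>"
  shows "5 \<le> k"
proof -
  have rainbow_path: "\<exists>p. geodesic (set D_arcs) x y p \<and> distinct (map \<Gamma> (arcs_of p))"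
    if "x < 7" "y < 7" "x \<noteq> y" for x y
    using \<Gamma> that unfolding strongly_rainbow_colouring_def by simp
  have rainbow_unique: "distinct (map \<Gamma> (arcs_of q))"
    if "x < 7" "y < 7" "x \<noteq> y" "set (geodesics_between D_arcs 7 x y) = {q}" for x y q
    using rainbow_path[OF that(1-3)] geodesic_unique[OF D_arcs_subset _ _ _ that(4)] that(1)
    by fastforce
  have "distinct [\<Gamma> (1, 2), \<Gamma> (2, 3), \<Gamma> (3, 4)]"
    "distinct [\<Gamma> (4, 5), \<Gamma> (5, 0), \<Gamma> (0, 1), \<Gamma> (1, 2)]"
    "distinct [\<Gamma> (3, 4), \<Gamma> (4, 5), \<Gamma> (5, 0), \<Gamma> (0, 1)]"
    using rainbow_unique[OF _ _ _ D_unique_geodesics(1)] rainbow_unique[OF _ _ _ D_unique_geodesics(2)]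
      rainbow_unique[OF _ _ _ D_unique_geodesics(3)] by simp_all
  then have "inj_on \<Gamma> {(0, 1), (1, 2), (3, 4), (4, 5), (5, 0)}"
    by auto
  from card_le_if_inj_on_colouring[OF \<Gamma> _ this]
  have "card {(0::nat, 1::nat), (1, 2), (3, 4), (4, 5), (5, 0)} \<le> k"
    by (simp add: D_arcs_def)
  then show ?thesis by simp
qed

theorem lemma1:
  shows "\<exists>(V :: nat set) A H.
           digraph V A \<and> strongly_connected V A \<and>
           H \<subseteq> A \<and> digraph V H \<and> strongly_connected V H \<and>
           src V A > src V H"
proof (intro exI conjI)
  show "strongly_connected {0..<7} (set D_arcs)"
    by (rule strongly_connected_if_strongly_rainbow_colouring[OF D_colouring_strongly_rainbow]) simp
  show "strongly_connected {0..<7} (set H_arcs)"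
    by (rule strongly_connected_if_strongly_rainbow_colouring[OF H_colouring_strongly_rainbow]) simp
  have "src {0..<7} (set H_arcs) \<le> 4"
    by (rule src_le[OF H_colouring_strongly_rainbow])
  also have "4 < src {0..<7} (set D_arcs)"
    by (rule src_gt[OF D_colouring_strongly_rainbow]) (fastforce dest: D_needs_five_colours)
  finally show "src {0..<7} (set H_arcs) < src {0..<7} (set D_arcs)" .
qed (fact digraph_D digraph_H H_arcs_subset)+

end
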